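(* Let $\Omega=[0,L]$ with $L>0$, and let $\boldsymbol{\varphi},\mathbf{v}_\varphi,\mathbf{N},\mathbf{M}:[0,L]\to\mathbb{R}^3$ and $\mathbf{d}=(\mathbf{d}_1,\mathbf{d}_2,\mathbf{d}_3),\ \mathbf{v}_d=(\mathbf{v}_{d,1},\mathbf{v}_{d,2},\mathbf{v}_{d,3}):[0,L]\to\mathbb{R}^9$ be continuously differentiable, where for every $s\in[0,L]$ the vectors $\mathbf{d}_1(s),\mathbf{d}_2(s),\mathbf{d}_3(s)$ are orthonormal with $\mathbf{d}_3=\mathbf{d}_1\times\mathbf{d}_2$. Set $\mathbf{R}=[\mathbf{d}_1\ \mathbf{d}_2\ \mathbf{d}_3]\in\mathbb{R}^{3\times3}$, $\mathbf{n}=\mathbf{R}\mathbf{N}$, $\mathbf{m}=\mathbf{R}\mathbf{M}$ and $\boldsymbol{\omega}=\tfrac12\sum_{i=1}^3 \mathbf{d}_i\times\mathbf{v}_{d,i}$. Then $$\int_0^L\Big(\mathbf{N}^\top\big(\mathbf{R}^\top\partial_s\mathbf{v}_\varphi+\mathbf{J}_N(\partial_s\boldsymbol{\varphi})^\top\mathbf{v}_d\big)+\mathbf{M}^\top\mathcal{J}_K\mathbf{v}_d\Big)\,ds-\int_0^L\Big(-\mathbf{v}_\varphi^\top\partial_s(\mathbf{R}\mathbf{N})+\mathbf{v}_d^\top\big(\mathbf{J}_N(\partial_s\boldsymbol{\varphi})\mathbf{N}+\mathcal{J}_M\mathbf{M}\big)\Big)\,ds=\Big[\mathbf{v}_\v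arphi^\top\mathbf{n}+\boldsymbol{\omega}^\top\mathbf{m}\Big]_{s=0}^{s=L}.$$
   Context: For $\mathbf{a}\in\mathbb{R}^3$, $\mathbf{J}_N(\mathbf{a})\in\mathbb{R}^{9\times3}$ is the block-diagonal matrix with the column $\mathbf{a}$ in each of its three diagonal $3\times1$ blocks (so $\mathbf{J}_N(\mathbf{a})^\top\mathbf{d}=(\mathbf{d}_1^\top\mathbf{a},\mathbf{d}_2^\top\mathbf{a},\mathbf{d}_3^\top\mathbf{a})$). For $\mathbf{d}=(\mathbf{d}_1,\mathbf{d}_2,\mathbf{d}_3)\in\mathbb{R}^9$, $\mathbf{L}(\mathbf{d})\in\mathbb{R}^{3\times9}$ is $\frac12\begin{bmatrix}\mathbf{0}&-\mathbf{d}_3^\top&\mathbf{d}_2^\top\\ \mathbf{d}_3^\top&\mathbf{0}&-\mathbf{d}_1^\top\\ -\mathbf{d}_2^\top&\mathbf{d}_1^\top&\mathbf{0}\end{bmatrix}$. The operators are $\mathcal{J}_K\mathbf{v}_d=\mathbf{L}(\partial_s\mathbf{d})\mathbf{v}_d-\mathbf{L}(\mathbf{d})\partial_s\mathbf{v}_d$ and $\mathcal{J}_M\mathbf{M}=\mathbf{L}(\partial_s\mathbf{d})^\top\mathbf{M}+\partial_s\big(\mathbf{L}(\mathbf{d})^\top\mathbf{M}\big)$. $[f]_{s=0}^{s=L}=f(L)-f(0)$. *)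

theory Defs
  imports "HOL-Analysis.Analysis"
begin

text \<open>Vectors in R^9 are represented as three stacked blocks in R^3, i.e. elements of
  real^3^3, where d$1, d$2, d$3 are the blocks d_1, d_2, d_3.  The inner product on
  real^3^3 is the standard R^9 inner product.\<close>

definition C1_on :: "real set \<Rightarrow> (real \<Rightarrow> 'a::real_normed_vector) \<Rightarrow> bool" where
  "C1_on S f \<longleftrightarrow> (\<exists>f'. (\<forall>x\<in>S. (f has_vector_derivative f' x) (at x within S)) \<and> continuous_on S f')"

definition dS :: "real set \<Rightarrow> (real \<Rightarrow> 'a::real_normed_vector) \<Rightarrow> real \<Rightarrow> 'a" where
  "dS S f s = vector_derivative f (at s within S)"

text \<open>J_N(a) (9x3 block diagonal with a in each diagonal block): action and transpose action.\<close>
definition JN :: "real^3 \<Rightarrow> real^3 \<Rightarrow> real^3^3" where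
  "JN a x = (\<chi> i. x$i *\<^sub>R a)"

definition JNT :: "real^3 \<Rightarrow> real^3^3 \<Rightarrow> real^3" where
  "JNT a d = (\<chi> i. d$i \<bullet> a)"

text \<open>The (k,j) block (a row vector in R^3) of the 3x9 matrix L(d).\<close>
definition Lblock :: "real^3^3 \<Rightarrow> 3 \<Rightarrow> 3 \<Rightarrow> real^3" where
  "Lblock d k j = (1/2) *\<^sub>R
     (if k = 1 \<and> j = 2 then - d$3
      else if k = 1 \<and> j = 3 then d$2
      else if k = 2 \<and> j = 1 then d$3
      else if k = 2 \<and> j = 3 then - d$1
      else if k = 3 \<and> j = 1 then - d$2
      else if k = 3 \<and> j = 2 then d$1
      else 0)"

definition Lmat :: "real^3^3 \<Rightarrow> real^3^3 \<Rightarrow> real^3" where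
  "Lmat d v = (\<chi> k. \<Sum>j\<in>UNIV. Lblock d k j \<bullet> v$j)"

definition LmatT :: "real^3^3 \<Rightarrow> real^3 \<Rightarrow> real^3^3" where
  "LmatT d M = (\<chi> j. \<Sum>k\<in>UNIV. M$k *\<^sub>R Lblock d k j)"

text \<open>R = [d_1 d_2 d_3] (columns d_i).\<close>
definition Rmat :: "real^3^3 \<Rightarrow> real^3^3" where
  "Rmat d = transpose d"

end

theory Submission
  imports Defs
begin

text \<open>Each operator in the second integral is the formal adjoint of the corresponding
  operator in the first: \<open>R\<close> of \<open>R\<^sup>T\<close>, \<open>J\<^sub>N\<close> of \<open>J\<^sub>N\<^sup>T\<close>
  and \<open>L\<^sup>T\<close> of \<open>L\<close>.  Hence, by the product rule, the difference of the two
  integrands is the derivative of \<open>v\<^sub>\<phi>\<^sup>T R N - M\<^sup>T L(d) v\<^sub>d\<close>,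
  and the fundamental theorem of calculus leaves only boundary terms.  For an
  orthonormal right-handed frame one has \<open>L(d) v\<^sub>d = - R\<^sup>T \<omega>\<close>, which
  turns \<open>- M\<^sup>T L(d) v\<^sub>d\<close> into \<open>\<omega>\<^sup>T m\<close>.\<close>

lemma C1_on_imp_continuous_on: "C1_on S f \<Longrightarrow> continuous_on S f"
  unfolding C1_on_def using continuous_on_vector_derivative by blast

lemma dS_eqI:
  assumes "a < b" "x \<in> {a..b}" "(f has_vector_derivative f') (at x within {a..b})"
  shows "dS {a..b} f x = f'"
  using vector_derivative_within_cbox[of a b x f f'] assms by (simp add: dS_def)

lemma C1_on_has_vector_derivative_dS:
  assumes "C1_on {a..b} f" "a < b" "x \<in> {a..b}"
  shows "(f has_vector_derivative dS {a..b} f x) (at x within {a..b})"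
  using assms dS_eqI unfolding C1_on_def by metis

lemma continuous_on_dS:
  assumes "C1_on {a..b} f" "a < b"
  shows "continuous_on {a..b} (dS {a..b} f)"
proof -
  obtain f' where f': "\<forall>x\<in>{a..b}. (f has_vector_derivative f' x) (at x within {a..b})"
    and "continuous_on {a..b} f'"
    using assms(1) unfolding C1_on_def by blast
  moreover have "\<forall>x\<in>{a..b}. f' x = dS {a..b} f x"
    using f' dS_eqI[OF assms(2)] by metis
  ultimately show ?thesis
    using continuous_on_eq by blast
qed

lemma dS_bounded_bilinear:
  assumes "bounded_bilinear B" "C1_on {a..b} f" "C1_on {a..b} g" "a < b" "x \<in> {a..b}"
  shows "dS {a..b} (\<lambda>t. B (f t) (g t)) x = B (f x) (dS {a..b} g x) + B (dS {a..b} f x) (g x)"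
  using assms by (intro dS_eqI bounded_bilinear.has_vector_derivative C1_on_has_vector_derivative_dS)

lemma transpose_Rmat: "transpose (Rmat d) = d"
  by (simp add: Rmat_def)

lemma bounded_bilinear_matrix_vector_mult [bounded_bilinear]:
  "bounded_bilinear (\<lambda>(A::real^'n^'m) (x::real^'n). A *v x)"
  unfolding bilinear_conv_bounded_bilinear[symmetric] bilinear_def
  by (auto intro!: linearI simp: matrix_vector_mult_def vec_eq_iff
      sum.distrib algebra_simps sum_distrib_left)

lemma bounded_bilinear_Rmat_mult [bounded_bilinear]:
  "bounded_bilinear (\<lambda>(d::real^3^3) (x::real^3). Rmat d *v x)"
  unfolding bilinear_conv_bounded_bilinear[symmetric] bilinear_def
  by (auto intro!: linearI simp: Rmat_def transpose_def matrix_vector_mult_def vec_eq_iff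
      sum.distrib algebra_simps sum_distrib_left)

lemma bounded_bilinear_transpose_Rmat_mult [bounded_bilinear]:
  "bounded_bilinear (\<lambda>(d::real^3^3) (x::real^3). transpose (Rmat d) *v x)"
  by (simp add: transpose_Rmat bounded_bilinear_matrix_vector_mult)

lemma bounded_bilinear_JNT [bounded_bilinear]: "bounded_bilinear JNT"
  unfolding bilinear_conv_bounded_bilinear[symmetric] bilinear_def
  by (auto intro!: linearI simp: JNT_def vec_eq_iff inner_add_left inner_add_right)

lemma Lblock_add: "Lblock (d + e) k j = Lblock d k j + Lblock e k j"
  by (simp add: Lblock_def algebra_simps)

lemma Lblock_scaleR: "Lblock (c *\<^sub>R d) k j = c *\<^sub>R Lblock d k j"
  by (simp add: Lblock_def algebra_simps)

lemma bounded_bilinear_Lmat [bounded_bilinear]: "bounded_bilinear Lmat"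
  unfolding bilinear_conv_bounded_bilinear[symmetric] bilinear_def
  by (auto intro!: linearI simp: Lmat_def Lblock_add Lblock_scaleR vec_eq_iff sum.distrib
      algebra_simps inner_add_left inner_add_right sum_distrib_left)

lemma bounded_bilinear_LmatT [bounded_bilinear]: "bounded_bilinear LmatT"
  unfolding bilinear_conv_bounded_bilinear[symmetric] bilinear_def
  by (auto intro!: linearI simp: LmatT_def Lblock_add Lblock_scaleR vec_eq_iff sum.distrib
      algebra_simps sum_distrib_left scaleR_sum_right)

lemma inner_transpose_Rmat: "n \<bullet> (transpose (Rmat d) *v w) = (Rmat d *v n) \<bullet> w"
  by (simp add: Rmat_def inner_vec_def sum_3 matrix_vector_mult_def transpose_def algebra_simps)

lemma inner_JNT: "n \<bullet> JNT a v = v \<bullet> JN a n"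
  by (simp add: JN_def JNT_def inner_vec_def sum_3 algebra_simps)

lemma inner_Lmat: "m \<bullet> Lmat d v = v \<bullet> LmatT d m"
  by (simp add: Lmat_def LmatT_def Lblock_def inner_vec_def sum_3 algebra_simps)

lemma cross3_orthonormal_frame:
  fixes d :: "real^3^3"
  assumes orth: "\<forall>i j. d$i \<bullet> d$j = (if i = j then 1 else 0)"
    and right: "d$3 = cross3 (d$1) (d$2)"
  shows "cross3 (d$2) (d$3) = d$1" "cross3 (d$3) (d$1) = d$2"
proof -
  have unit: "d$i \<bullet> d$i = 1" and perp: "i \<noteq> j \<Longrightarrow> d$i \<bullet> d$j = 0" for i j
    using orth by auto
  show "cross3 (d$2) (d$3) = d$1"
    unfolding right Lagrange by (simp add: unit perp inner_commute)
  show "cross3 (d$3) (d$1) = d$2"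
    unfolding right by (subst cross_skew) (simp add: Lagrange unit perp inner_commute)
qed

lemma Lmat_orthonormal_frame:
  fixes d v :: "real^3^3"
  assumes orth: "\<forall>i j. d$i \<bullet> d$j = (if i = j then 1 else 0)"
    and right: "d$3 = cross3 (d$1) (d$2)"
  shows "Lmat d v = - (transpose (Rmat d) *v ((1/2) *\<^sub>R (\<Sum>i\<in>UNIV. cross3 (d$i) (v$i))))"
proof -
  have row: "(d *v w) $ k = d$k \<bullet> w" for w k
    by (simp add: matrix_vector_mult_def inner_vec_def)
  have triple: "d$k \<bullet> cross3 (d$i) w = cross3 (d$k) (d$i) \<bullet> w" for k i and w :: "real^3"
    by (metis cross_triple inner_commute)
  have table: "cross3 (d$1) (d$2) = d$3" "cross3 (d$2) (d$3) = d$1" "cross3 (d$3) (d$1) = d$2"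
    "cross3 (d$2) (d$1) = - d$3" "cross3 (d$3) (d$2) = - d$1" "cross3 (d$1) (d$3) = - d$2"
    using right cross3_orthonormal_frame[OF orth right] cross_skew by metis+
  have "Lmat d v $ k = - (d$k \<bullet> ((1/2) *\<^sub>R (\<Sum>i\<in>UNIV. cross3 (d$i) (v$i))))" for k
    using exhaust_3[of k]
    by (auto simp: Lmat_def Lblock_def sum_3 inner_add_right triple table field_simps)
  then show ?thesis
    by (simp add: vec_eq_iff row transpose_Rmat)
qed

lemma angular_velocity_inner_Rmat:
  fixes d v :: "real^3^3"
  assumes "\<forall>i j. d$i \<bullet> d$j = (if i = j then 1 else 0)"
    and "d$3 = cross3 (d$1) (d$2)"
  shows "((1/2) *\<^sub>R (\<Sum>i\<in>UNIV. cross3 (d$i) (v$i))) \<bullet> (Rmat d *v m) = - (m \<bullet> Lmat d v)"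
  unfolding Lmat_orthonormal_frame[OF assms] inner_minus_right inner_transpose_Rmat
  by (simp add: inner_commute)

lemma weak_forms_integrand_difference:
  fixes N N' M M' vphi vphi' phi' :: "real^3" and d d' vd vd' :: "real^3^3"
  shows "N \<bullet> (transpose (Rmat d) *v vphi' + JNT phi' vd) + M \<bullet> (Lmat d' vd - Lmat d vd')
      - (- (vphi \<bullet> (Rmat d *v N' + Rmat d' *v N))
         + vd \<bullet> (JN phi' N + (LmatT d' M + (LmatT d M' + LmatT d' M))))
    = (vphi \<bullet> (Rmat d *v N' + Rmat d' *v N) + vphi' \<bullet> (Rmat d *v N))
      - (M \<bullet> (Lmat d vd' + Lmat d' vd) + M' \<bullet> Lmat d vd)"
  unfolding inner_add_right inner_diff_right inner_minus_right
    inner_transpose_Rmat inner_JNT inner_Lmat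
  by (simp add: algebra_simps inner_commute)

lemma weak_forms_integration_by_parts:
  fixes a b :: real and phi vphi N M :: "real \<Rightarrow> real^3" and d vd :: "real \<Rightarrow> real^3^3"
  assumes "a < b"
    and "C1_on {a..b} phi" "C1_on {a..b} vphi" "C1_on {a..b} N" "C1_on {a..b} M"
    and "C1_on {a..b} d" "C1_on {a..b} vd"
  shows "integral {a..b} (\<lambda>s.
        N s \<bullet> (transpose (Rmat (d s)) *v dS {a..b} vphi s + JNT (dS {a..b} phi s) (vd s))
      + M s \<bullet> (Lmat (dS {a..b} d s) (vd s) - Lmat (d s) (dS {a..b} vd s)))
    - integral {a..b} (\<lambda>s.
        - (vphi s \<bullet> dS {a..b} (\<lambda>t. Rmat (d t) *v N t) s)
      + vd s \<bullet> (JN (dS {a..b} phi s) (N s)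
                + (LmatT (dS {a..b} d s) (M s) + dS {a..b} (\<lambda>t. LmatT (d t) (M t)) s)))
    = (vphi b \<bullet> (Rmat (d b) *v N b) - M b \<bullet> Lmat (d b) (vd b))
      - (vphi a \<bullet> (Rmat (d a) *v N a) - M a \<bullet> Lmat (d a) (vd a))"
    (is "integral _ ?A - integral _ ?B = _")
proof -
  let ?S = "{a..b}" and ?D = "dS {a..b}"
  define F where "F t = vphi t \<bullet> (Rmat (d t) *v N t) - M t \<bullet> Lmat (d t) (vd t)" for t
  have "(F has_vector_derivative ?A s - ?B s) (at s within ?S)" if s: "s \<in> ?S" for s
  proof -
    have "?D (\<lambda>t. Rmat (d t) *v N t) s = Rmat (d s) *v ?D N s + Rmat (?D d s) *v N s"
      and "?D (\<lambda>t. LmatT (d t) (M t)) s = LmatT (d s) (?D M s) + LmatT (?D d s) (M s)"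
      using assms s by (simp_all add: dS_bounded_bilinear[OF bounded_bilinear_Rmat_mult]
          dS_bounded_bilinear[OF bounded_bilinear_LmatT])
    then have difference: "?A s - ?B s
      = (vphi s \<bullet> (Rmat (d s) *v ?D N s + Rmat (?D d s) *v N s) + ?D vphi s \<bullet> (Rmat (d s) *v N s))
        - (M s \<bullet> (Lmat (d s) (?D vd s) + Lmat (?D d s) (vd s)) + ?D M s \<bullet> Lmat (d s) (vd s))"
      by (simp only: weak_forms_integrand_difference)
    show ?thesis
      unfolding difference F_def using assms s
      by (intro has_vector_derivative_diff C1_on_has_vector_derivative_dS
          bounded_bilinear.has_vector_derivative[OF bounded_bilinear_inner]
          bounded_bilinear.has_vector_derivative[OF bounded_bilinear_Rmat_mult]
          bounded_bilinear.has_vector_derivative[OF bounded_bilinear_Lmat])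
  qed
  then have difference_integral: "((\<lambda>s. ?A s - ?B s) has_integral F b - F a) ?S"
    using fundamental_theorem_of_calculus[of a b F] assms(1) by auto
  have integrable: "?A integrable_on ?S"
    using assms
    by (intro integrable_continuous_interval continuous_intros continuous_on_dS C1_on_imp_continuous_on)
  have "(?B has_integral integral ?S ?A - (F b - F a)) ?S"
    using has_integral_diff[OF integrable_integral[OF integrable] difference_integral] by simp
  then show ?thesis
    unfolding F_def by (simp add: integral_unique)
qed

theorem mainTheorem1:
  fixes L :: real
    and phi vphi N M :: "real \<Rightarrow> real^3"
    and d vd :: "real \<Rightarrow> real^3^3"
  assumes "L > 0"
    and "C1_on {0..L} phi" "C1_on {0..L} vphi" "C1_on {0..L} N" "C1_on {0..L} M"
    and "C1_on {0..L} d" "C1_on {0..L} vd"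
    and "\<forall>s\<in>{0..L}. \<forall>i j. d s $ i \<bullet> d s $ j = (if i = j then 1 else 0)"
    and "\<forall>s\<in>{0..L}. d s $ 3 = cross3 (d s $ 1) (d s $ 2)"
  shows
   "integral {0..L} (\<lambda>s.
        N s \<bullet> (transpose (Rmat (d s)) *v dS {0..L} vphi s + JNT (dS {0..L} phi s) (vd s))
      + M s \<bullet> (Lmat (dS {0..L} d s) (vd s) - Lmat (d s) (dS {0..L} vd s)))
    - integral {0..L} (\<lambda>s.
        - (vphi s \<bullet> dS {0..L} (\<lambda>t. Rmat (d t) *v N t) s)
      + vd s \<bullet> (JN (dS {0..L} phi s) (N s)
                + (LmatT (dS {0..L} d s) (M s) + dS {0..L} (\<lambda>t. LmatT (d t) (M t)) s)))
    = (vphi L \<bullet> (Rmat (d L) *v N L)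
         + ((1/2) *\<^sub>R (\<Sum>i\<in>UNIV. cross3 (d L $ i) (vd L $ i))) \<bullet> (Rmat (d L) *v M L))
      - (vphi 0 \<bullet> (Rmat (d 0) *v N 0)
         + ((1/2) *\<^sub>R (\<Sum>i\<in>UNIV. cross3 (d 0 $ i) (vd 0 $ i))) \<bullet> (Rmat (d 0) *v M 0))"
proof -
  have ends: "0 \<in> {0..L}" "L \<in> {0..L}"
    using \<open>L > 0\<close> by auto
  show ?thesis
    using weak_forms_integration_by_parts[OF assms(1-7)] assms(8,9) ends
      angular_velocity_inner_Rmat[where d = "d 0" and v = "vd 0" and m = "M 0"]
      angular_velocity_inner_Rmat[where d = "d L" and v = "vd L" and m = "M L"]
    by simp
qed

end
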